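(* Let $k,\ell_1,\dots,\ell_k$ be positive integers. If $1\le i<k$ and $\ell_{i+1}>1$, then $$|\langle \ell_1,\dots,\ell_{i-1},\ell_i+1,\ell_{i+1}-1,\ell_{i+2},\dots,\ell_k\rangle| = |\langle\ell_1,\dots,\ell_k\rangle| + |\langle \ell_1,\dots,\ell_{i-1}\rangle|\cdot|\langle \ell_{i+1}-1,\ell_{i+2},\dots,\ell_k\rangle|;$$ moreover $$|\langle\ell_1,\dots,\ell_{k-1},\ell_k+1\rangle| = |\langle\ell_1,\dots,\ell_k\rangle| + |\langle\ell_1,\dots,\ell_{k-1}\rangle|;$$ and, if $\ell_1>1$ (and $k\ge 2$), $$|\langle\ell_1-1,\ell_2,\dots,\ell_k\rangle| = |\langle\ell_1,\dots,\ell_k\rangle| - |\langle\ell_1+\ell_2-1,\ell_3,\dots,\ell_k\rangle|.$$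
   Context: For a nonnegative integer $m$ and a tuple $(\ell_1,\dots,\ell_m)$ of integers with partial sums $L_i=\ell_1+\dots+\ell_i$, define $$\langle\ell_1,\dots,\ell_m\rangle=\{(x_0,x_1,\dots,x_m)\in\mathbb Z^{m+1}: x_0=0,\ x_{i-1}<x_i\le L_i \text{ for all } 1\le i\le m\}.$$ For $m=0$ (empty tuple) this set is $\{(0)\}$, of size $1$. *)

theory Defs
  imports Main
begin

text \<open>The tuple (l_1,...,l_m) is the list ls (l_i = ls ! (i-1)); the vector
 (x_0,...,x_m) is a list xs of length m+1 with xs ! j = x_j.
 Partial sum L_i = sum_list (take i ls).\<close>

definition bset :: "int list \<Rightarrow> int list set" where
  "bset ls = {xs. length xs = length ls + 1 \<and> xs ! 0 = 0 \<and>
     (\<forall>i\<in>{1..length ls}. xs ! (i - 1) < xs ! i \<and> xs ! i \<le> sum_list (take i ls))}"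

definition bcard :: "int list \<Rightarrow> int" where
  "bcard ls = int (card (bset ls))"

end

theory Submission
  imports Defs
begin

text \<open>An element of <l_1,...,l_m> is a chain 0 < x_1 < ... < x_m with x_i \<le> L_i, so it depends on
  the tuple only through its partial sums, and counting by the first entry gives a recursion.
  Replacing (l_i, l_(i+1)) by (l_i + 1, l_(i+1) - 1) raises the single bound L_i by one; the chains
  gained are those with x_i = L_i + 1, and they split into a chain for (l_1,...,l_(i-1)) and a chain
  above L_i + 1, which is a translate of a chain for (l_(i+1) - 1, l_(i+2), ...). The last identity
  splits the first-entry recursion at x_1 = 1 and shifts all entries down by one.\<close>

definition chains :: "int \<Rightarrow> int list \<Rightarrow> int list set" where
  "chains c bs = {ys. sorted_wrt (<) (c # ys) \<and> list_all2 (\<le>) ys bs}"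

lemma chains_Nil: "chains c [] = {[]}"
  by (auto simp: chains_def)

lemma chains_Cons: "chains c (b # bs) = (\<Union>y\<in>{c<..b}. (#) y ` chains y bs)"
  by (auto simp: chains_def list_all2_Cons2) (meson less_trans)

lemma chains_conv_nth:
  "chains c bs = {ys. length ys = length bs \<and> (\<forall>j<length bs. (c # ys) ! j < ys ! j \<and> ys ! j \<le> bs ! j)}"
  unfolding chains_def sorted_wrt_iff_nth_Suc_transp[OF transp_on_less]
  by (auto simp: list_all2_conv_all_nth)

lemma finite_chains: "finite (chains c bs)"
  by (induction bs arbitrary: c) (auto simp: chains_Nil chains_Cons)

lemma card_chains_Cons: "card (chains c (b # bs)) = (\<Sum>y\<in>{c<..b}. card (chains y bs))"
proof -
  have "card (chains c (b # bs)) = (\<Sum>y\<in>{c<..b}. card ((#) y ` chains y bs))"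
    unfolding chains_Cons by (rule card_UN_disjoint) (auto simp: finite_chains)
  also have "\<dots> = (\<Sum>y\<in>{c<..b}. card (chains y bs))"
    by (simp add: card_image)
  finally show ?thesis .
qed

lemma chains_shift: "chains (c + d) (map (\<lambda>x. x + d) bs) = map (\<lambda>x. x + d) ` chains c bs"
proof
  show "chains (c + d) (map (\<lambda>x. x + d) bs) \<subseteq> map (\<lambda>x. x + d) ` chains c bs"
  proof
    fix ys assume "ys \<in> chains (c + d) (map (\<lambda>x. x + d) bs)"
    then have "map (\<lambda>x. x - d) ys \<in> chains c bs"
      by (auto simp: chains_def sorted_wrt_map list_all2_map1 list_all2_map2
               elim: sorted_wrt_mono_rel[rotated] list_all2_mono)
    then show "ys \<in> map (\<lambda>x. x + d) ` chains c bs"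
      by (rule rev_image_eqI) (simp add: comp_def)
  qed
qed (auto simp: chains_def sorted_wrt_map list_all2_map1 list_all2_map2)

lemma card_chains_shift: "card (chains (c + d) (map (\<lambda>x. x + d) bs)) = card (chains c bs)"
  by (simp add: chains_shift card_image inj_on_def)

lemma card_chains_pred: "card (chains 1 bs) = card (chains 0 (map (\<lambda>x. x - 1) bs))"
  using card_chains_shift[of 0 1 "map (\<lambda>x. x - 1) bs"] by (simp add: comp_def)

lemma card_chains_Cons_split:
  assumes "c < b"
  shows "card (chains c (b # bs)) = card (chains (c + 1) bs) + card (chains (c + 1) (b # bs))"
proof -
  have "{c<..b} = insert (c + 1) {c + 1<..b}" using assms by auto
  then show ?thesis by (simp add: card_chains_Cons)
qed

lemma card_chains_append_Suc:
  assumes "c \<le> b" "\<forall>x\<in>set bs. x \<le> b"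
  shows "card (chains c (bs @ (b + 1) # cs))
           = card (chains c (bs @ b # cs)) + card (chains c bs) * card (chains (b + 1) cs)"
  using assms
proof (induction bs arbitrary: c)
  case Nil
  \<comment> \<open>the chains gained are those whose entry at this position is \<open>b + 1\<close>\<close>
  then have "{c<..b + 1} = insert (b + 1) {c<..b}" by auto
  then show ?case by (simp add: card_chains_Cons chains_Nil)
next
  case (Cons b' bs)
  have "card (chains c ((b' # bs) @ (b + 1) # cs)) = (\<Sum>y\<in>{c<..b'}. card (chains y (bs @ (b + 1) # cs)))"
    by (simp add: card_chains_Cons)
  also have "\<dots> = (\<Sum>y\<in>{c<..b'}. card (chains y (bs @ b # cs)) + card (chains y bs) * card (chains (b + 1) cs))"
    using Cons by (intro sum.cong) auto
  also have "\<dots> = card (chains c ((b' # bs) @ b # cs)) + card (chains c (b' # bs)) * card (chains (b + 1) cs)"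
    by (simp add: card_chains_Cons sum.distrib sum_distrib_right)
  finally show ?case .
qed

fun partial_sums :: "int \<Rightarrow> int list \<Rightarrow> int list" where
  "partial_sums c [] = []"
| "partial_sums c (l # ls) = (c + l) # partial_sums (c + l) ls"

lemma length_partial_sums [simp]: "length (partial_sums c ls) = length ls"
  by (induction ls arbitrary: c) auto

lemma partial_sums_append:
  "partial_sums c (ls @ ms) = partial_sums c ls @ partial_sums (c + sum_list ls) ms"
  by (induction ls arbitrary: c) (auto simp: add.assoc)

lemma map_plus_partial_sums: "map (\<lambda>x. x + d) (partial_sums c ls) = partial_sums (c + d) ls"
  by (induction ls arbitrary: c) (auto simp: algebra_simps)

lemma nth_partial_sums: "j < length ls \<Longrightarrow> partial_sums c ls ! j = c + sum_list (take (Suc j) ls)"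
  by (induction ls arbitrary: c j) (auto simp: nth_Cons' add.assoc)

lemma partial_sums_le:
  assumes "\<forall>l\<in>set ls. 0 \<le> l" "x \<in> set (partial_sums c ls)"
  shows "x \<le> c + sum_list ls"
  using assms
proof (induction ls arbitrary: c)
  case (Cons l ls)
  have "0 \<le> sum_list ls" using Cons.prems(1) by (intro sum_list_nonneg) auto
  with Cons show ?case by (fastforce simp: add.assoc)
qed simp

lemma bset_eq_chains: "bset ls = (#) 0 ` chains 0 (partial_sums 0 ls)"
proof -
  have "xs \<in> bset ls \<longleftrightarrow> (\<exists>ys. xs = 0 # ys \<and> ys \<in> chains 0 (partial_sums 0 ls))" for xs
  proof (cases xs)
    case (Cons x ys)
    have "(\<forall>i\<in>{1..length ls}. xs ! (i - 1) < xs ! i \<and> xs ! i \<le> sum_list (take i ls))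
          \<longleftrightarrow> (\<forall>j<length ls. xs ! j < ys ! j \<and> ys ! j \<le> partial_sums 0 ls ! j)"
      (is "?L \<longleftrightarrow> ?R")
    proof
      assume H: ?L
      show ?R
      proof (intro allI impI)
        fix j assume "j < length ls"
        then show "xs ! j < ys ! j \<and> ys ! j \<le> partial_sums 0 ls ! j"
          using H[rule_format, of "Suc j"] by (simp add: Cons nth_partial_sums)
      qed
    next
      assume H: ?R
      show ?L
      proof
        fix i assume "i \<in> {1..length ls}"
        then obtain j where "i = Suc j" "j < length ls" by (cases i) auto
        then show "xs ! (i - 1) < xs ! i \<and> xs ! i \<le> sum_list (take i ls)"
          using H[rule_format, of j] by (simp add: Cons nth_partial_sums)
      qed
    qed
    then show ?thesis by (auto simp: Cons bset_def chains_conv_nth)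
  qed (simp add: bset_def)
  then show ?thesis by blast
qed

lemma bcard_eq_card_chains: "bcard ls = int (card (chains 0 (partial_sums 0 ls)))"
  by (simp add: bcard_def bset_eq_chains card_image)

lemma bcard_decr_first:
  assumes "1 \<le> a"
  shows "bcard (a # b # ds) = bcard ((a - 1) # b # ds) + bcard ((a + b - 1) # ds)"
proof -
  define cs where "cs = partial_sums a (b # ds)"
  have "map (\<lambda>x. x - 1) cs = partial_sums (a - 1) (b # ds)"
    using map_plus_partial_sums[of "-1" a "b # ds"] by (simp add: cs_def)
  then have "map (\<lambda>x. x - 1) (a # cs) = partial_sums 0 ((a - 1) # b # ds)"
      and "map (\<lambda>x. x - 1) cs = partial_sums 0 ((a + b - 1) # ds)"
    by (simp_all add: algebra_simps)
  moreover have "card (chains 0 (a # cs)) = card (chains 1 cs) + card (chains 1 (a # cs))"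
    using card_chains_Cons_split[of 0 a] assms by simp
  ultimately show ?thesis
    by (simp add: bcard_eq_card_chains cs_def card_chains_pred diff_add_eq)
qed

lemma bcard_incr_decr:
  assumes "\<forall>l\<in>set as. 0 \<le> l" "0 \<le> a"
  shows "bcard (as @ (a + 1) # (b - 1) # ds)
           = bcard (as @ a # b # ds) + bcard as * bcard ((b - 1) # ds)"
proof -
  define s where "s = sum_list as + a"
  define cs where "cs = partial_sums s (b # ds)"
  have "0 \<le> sum_list as" using assms(1) by (simp add: sum_list_nonneg)
  then have s: "0 \<le> s" "\<forall>x\<in>set (partial_sums 0 as). x \<le> s"
    using partial_sums_le[OF assms(1), of _ 0] assms(2) by (fastforce simp: s_def)+
  have "partial_sums 0 (as @ a # b # ds) = partial_sums 0 as @ s # cs"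
    by (simp add: partial_sums_append s_def cs_def)
  moreover have "partial_sums 0 (as @ (a + 1) # (b - 1) # ds) = partial_sums 0 as @ (s + 1) # cs"
    by (simp add: partial_sums_append s_def cs_def algebra_simps)
  moreover have "cs = map (\<lambda>x. x + (s + 1)) (partial_sums 0 ((b - 1) # ds))"
    by (simp only: map_plus_partial_sums) (simp add: cs_def algebra_simps)
  then have "card (chains (s + 1) cs) = card (chains 0 (partial_sums 0 ((b - 1) # ds)))"
    by (metis add_0 card_chains_shift)
  ultimately show ?thesis
    using card_chains_append_Suc[OF s, of cs] by (simp add: bcard_eq_card_chains)
qed

lemma bcard_incr_last:
  assumes "\<forall>l\<in>set as. 0 \<le> l" "0 \<le> a"
  shows "bcard (as @ [a + 1]) = bcard (as @ [a]) + bcard as"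
proof -
  define s where "s = sum_list as + a"
  have "0 \<le> sum_list as" using assms(1) by (simp add: sum_list_nonneg)
  then have s: "0 \<le> s" "\<forall>x\<in>set (partial_sums 0 as). x \<le> s"
    using partial_sums_le[OF assms(1), of _ 0] assms(2) by (fastforce simp: s_def)+
  have "partial_sums 0 (as @ [a]) = partial_sums 0 as @ [s]"
    and "partial_sums 0 (as @ [a + 1]) = partial_sums 0 as @ [s + 1]"
    by (simp_all add: partial_sums_append s_def)
  then show ?thesis
    using card_chains_append_Suc[OF s, of "[]"] by (simp add: bcard_eq_card_chains chains_Nil)
qed

lemma take_nth_nth_drop:
  assumes "1 \<le> i" "i < length xs"
  shows "take (i - 1) xs @ xs ! (i - 1) # xs ! i # drop (i + 1) xs = xs"
  using assms id_take_nth_drop[of "i - 1" xs] Cons_nth_drop_Suc[of i xs] by simp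

theorem lemma4p2:
  fixes ls :: "int list"
  assumes "length ls \<ge> 1"
    and "\<forall>l\<in>set ls. l > 0"
  shows "(\<forall>i. 1 \<le> i \<and> i < length ls \<and> ls ! i > 1 \<longrightarrow>
            bcard (take (i - 1) ls @ [ls ! (i - 1) + 1, ls ! i - 1] @ drop (i + 1) ls)
              = bcard ls + bcard (take (i - 1) ls) * bcard ((ls ! i - 1) # drop (i + 1) ls))
      \<and> bcard (butlast ls @ [last ls + 1]) = bcard ls + bcard (butlast ls)
      \<and> (length ls \<ge> 2 \<and> ls ! 0 > 1 \<longrightarrow>
            bcard ((ls ! 0 - 1) # tl ls) = bcard ls - bcard ((ls ! 0 + ls ! 1 - 1) # drop 2 ls))"
proof (intro conjI allI impI)
  \<comment> \<open>only positivity is needed; the hypotheses \<open>ls ! i > 1\<close> and \<open>ls ! 0 > 1\<close> are not\<close>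
  fix i assume i: "1 \<le> i \<and> i < length ls \<and> ls ! i > 1"
  then have "0 \<le> ls ! (i - 1)" using assms(2) nth_mem[of "i - 1" ls] by fastforce
  moreover have "\<forall>l\<in>set (take (i - 1) ls). 0 \<le> l" using assms(2) set_take_subset by force
  ultimately show "bcard (take (i - 1) ls @ [ls ! (i - 1) + 1, ls ! i - 1] @ drop (i + 1) ls)
      = bcard ls + bcard (take (i - 1) ls) * bcard ((ls ! i - 1) # drop (i + 1) ls)"
    using bcard_incr_decr take_nth_nth_drop[of i ls] i by simp
next
  have "ls \<noteq> []" using assms(1) by auto
  then have "0 \<le> last ls" "\<forall>l\<in>set (butlast ls). 0 \<le> l"
    using assms(2) by (auto dest: in_set_butlastD less_imp_le)
  then show "bcard (butlast ls @ [last ls + 1]) = bcard ls + bcard (butlast ls)"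
    using bcard_incr_last append_butlast_last_id[OF \<open>ls \<noteq> []\<close>] by metis
next
  assume "length ls \<ge> 2 \<and> ls ! 0 > 1"
  then obtain a b ds where "ls = a # b # ds" "1 \<le> a"
    by (cases ls; cases "tl ls") auto
  then show "bcard ((ls ! 0 - 1) # tl ls) = bcard ls - bcard ((ls ! 0 + ls ! 1 - 1) # drop 2 ls)"
    by (simp add: bcard_decr_first)
qed

end
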